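(* Let $T\in(0,\infty)$, $(\Omega,\mathcal{F},\mathbb{P},(\mathcal{F}_t)_{t\in[0,T]})$ a stochastic basis, $W\colon[0,T]\times\Omega\to\mathbb{R}$ a standard $(\mathcal{F}_t)$-Brownian motion with continuous sample paths, $X\colon[0,T]\times\Omega\to\mathbb{R}$ an adapted process with continuous sample paths satisfying $X_t=X_0-\int_0^t(X_s)^3ds+W_t$ $\mathbb{P}$-a.s. for all $t\in[0,T]$, and let $\varepsilon\in(0,\frac12]$ satisfy $\mathbb{E}[\exp(\varepsilon|X_0|^4)]<\infty$. Let $D_t\in\mathcal{B}(\mathbb{R})$, $t\in(0,T]$, be a non-increasing family of sets with $\lambda_{\mathbb{R}}(D_T)\cdot\mathbb{P}[X_0\in D_T]>0$ and $\bigcup_{t\in(0,T]}\mathring{D}_t=\mathbb{R}$, and let $Y^N\colon[0,T]\times\Omega\to\mathbb{R}$, $N\in\mathbb{N}$, satisfy $Y^N_0=X_0$ and $$Y^N_t=Y^N_{nT/N}+\mathbb{1}_{D_{T/N}}(Y^N_{nT/N})\Big(W_t-W_{nT/N}-(Y^N_{nT/N})^3(t-\tfrac{nT}N)\Big)$$ for all $t\in[\frac{nT}N,\frac{(n+1)T}N]$, $n\in\{0,\dots,N-1\}$, $N\in\mathbb{N}$. Then for all $t\in(0,T]$, $N\in\mathbb{N}$, $p\in(0,\infty)$ and $q\in(2,\infty)$: $\lim_{M\to\infty}\mathbb{P}[\sup_{s\in[0,T]}|X_s-Y^M_s|>p]=0$ and $\mathbb{E}[\exp(p|Y^N_t|^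q)]=\infty$.
   Context: $\lambda_{\mathbb{R}}$ is Lebesgue measure; non-increasing family: $D_{t_2}\subseteq D_{t_1}$ for $t_1\le t_2$; $\mathring{D}_t$ is the interior of $D_t$. *)

theory Defs
  imports "HOL-Probability.Probability"
begin

definition stochastic_basis :: "'a measure \<Rightarrow> (real \<Rightarrow> 'a measure) \<Rightarrow> real \<Rightarrow> bool" where
  "stochastic_basis P F T \<longleftrightarrow>
     prob_space P \<and>
     (\<forall>t\<in>{0..T}. subalgebra P (F t)) \<and>
     (\<forall>s t. 0 \<le> s \<and> s \<le> t \<and> t \<le> T \<longrightarrow> sets (F s) \<subseteq> sets (F t)) \<and>
     (\<forall>N\<in>null_sets P. \<forall>A. A \<subseteq> N \<longrightarrow> A \<in> sets (F 0)) \<and>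
     (\<forall>t\<in>{0..<T}. sets (F t) = (\<Inter>s\<in>{t<..T}. sets (F s)))"

definition std_brownian_motion ::
  "'a measure \<Rightarrow> (real \<Rightarrow> 'a measure) \<Rightarrow> real \<Rightarrow> (real \<Rightarrow> 'a \<Rightarrow> real) \<Rightarrow> bool" where
  "std_brownian_motion P F T W \<longleftrightarrow>
     (\<forall>t\<in>{0..T}. W t \<in> borel_measurable (F t)) \<and>
     (\<forall>\<omega>\<in>space P. continuous_on {0..T} (\<lambda>t. W t \<omega>)) \<and>
     (AE \<omega> in P. W 0 \<omega> = 0) \<and>
     (\<forall>s t. 0 \<le> s \<and> s < t \<and> t \<le> T \<longrightarrow>
        distributed P lborel (\<lambda>\<omega>. W t \<omega> - W s \<omega>) (normal_density 0 (sqrt (t - s))) \<and>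
        (\<forall>A\<in>sets (F s). \<forall>B\<in>sets borel.
           measure P (A \<inter> {\<omega>\<in>space P. W t \<omega> - W s \<omega> \<in> B})
             = measure P A * measure P {\<omega>\<in>space P. W t \<omega> - W s \<omega> \<in> B}))"

end

theory Submission
  imports Defs
begin

text \<open>Pathwise, the tamed scheme is eventually the explicit Euler scheme: a path of \<open>X\<close> is
  bounded and the interiors of the decreasing sets \<open>D t\<close> cover the line, so by compactness a
  neighbourhood of its range lies in \<open>D (T/N)\<close> for all large \<open>N\<close>. A discrete Gronwall argument
  for the cubic drift, which is Lipschitz on bounded sets, then gives uniform convergence on
  \<open>[0,T]\<close>. This holds almost surely, hence in probability.

  For the moments, fix a bounded part \<open>S\<close> of \<open>D T\<close> charged both by Lebesgue measure and by the
  law of \<open>X 0\<close>. By independence of the Brownian increments, \<open>Y N\<close> stays in \<open>S\<close> at all grid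
  points before \<open>t\<close> with positive probability, and on that event \<open>Y N t\<close> is a bounded quantity
  plus an independent Gaussian. So \<open>P[Y N t \<ge> r]\<close> decays only like \<open>exp (-c r\<^sup>2)\<close>, which
  \<open>exp (p r\<^sup>q)\<close> with \<open>q > 2\<close> outgrows.\<close>

section \<open>Pathwise convergence of the tamed Euler scheme\<close>

definition grid :: "real \<Rightarrow> nat \<Rightarrow> nat \<Rightarrow> real" where
  "grid T N n = real n * T / real N"

lemma grid_0 [simp]: "grid T N 0 = 0"
  by (simp add: grid_def)

lemma grid_Suc: "grid T N (Suc n) = grid T N n + T / real N"
  by (simp add: grid_def add_divide_distrib algebra_simps)

lemma grid_less_Suc: "0 < T \<Longrightarrow> 1 \<le> N \<Longrightarrow> grid T N n < grid T N (Suc n)"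
  by (simp add: grid_Suc)

lemma grid_in_interval: "0 < T \<Longrightarrow> n \<le> N \<Longrightarrow> grid T N n \<in> {0..T}"
  by (cases "N = 0") (auto simp: grid_def divide_le_eq mult_right_mono)

lemma grid_interval_containing:
  assumes "0 < T" "1 \<le> N" "s \<in> {0..T}"
  obtains n where "n < N" "s \<in> {grid T N n .. grid T N (Suc n)}"
proof -
  define n where "n = min (N - 1) (nat \<lfloor>s * N / T\<rfloor>)"
  have "0 \<le> s * N / T" using assms by auto
  then have fl: "real (nat \<lfloor>s * N / T\<rfloor>) \<le> s * N / T" "s * N / T < real (nat \<lfloor>s * N / T\<rfloor>) + 1"
    by linarith+
  have "real n \<le> s * N / T" unfolding n_def using fl by auto
  then have "grid T N n \<le> s" using assms by (simp add: grid_def field_simps)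
  moreover have "s \<le> grid T N (Suc n)"
  proof (cases "nat \<lfloor>s * N / T\<rfloor> \<le> N - 1")
    case True
    then have "real (Suc n) = real (nat \<lfloor>s * N / T\<rfloor>) + 1" unfolding n_def by simp
    then have "s * N / T \<le> real (Suc n)" using fl by linarith
    then show ?thesis using assms by (simp add: grid_def field_simps)
  next
    case False
    then have "real (Suc n) = real N" unfolding n_def using assms by auto
    then show ?thesis using assms by (auto simp: grid_def)
  qed
  moreover have "n < N" unfolding n_def using assms by auto
  ultimately show ?thesis using that by auto
qed

lemma grid_interval_containing_right:
  assumes "0 < T" "1 \<le> N" "t \<in> {0<..T}"
  obtains n where "n < N" "grid T N n < t" "t \<le> grid T N (Suc n)"
proof -
  have "t \<in> {0..T}" using assms(3) by simp
  then obtain m where m: "m < N" "t \<in> {grid T N m..grid T N (Suc m)}"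
    using grid_interval_containing[OF assms(1,2)] by blast
  show ?thesis
  proof (cases "grid T N m < t")
    case True
    then show ?thesis using that m by auto
  next
    case False
    then have t: "t = grid T N m" using m by auto
    then obtain k where k: "m = Suc k" using assms(3) by (cases m) auto
    then show ?thesis using that[of k] m t grid_less_Suc[OF assms(1,2), of k] by auto
  qed
qed

lemma grid_intervals_cover:
  assumes "0 < T" "1 \<le> N"
  shows "{0..T} = (\<Union>n<N. {grid T N n..grid T N (Suc n)})"
proof (intro equalityI subsetI)
  fix t assume "t \<in> {0..T}"
  then obtain n where "n < N" "t \<in> {grid T N n..grid T N (Suc n)}"
    using grid_interval_containing[OF assms] by blast
  then show "t \<in> (\<Union>n<N. {grid T N n..grid T N (Suc n)})" by blast
next
  fix t assume "t \<in> (\<Union>n<N. {grid T N n..grid T N (Suc n)})"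
  then obtain n where "n < N" "t \<in> {grid T N n..grid T N (Suc n)}" by blast
  then show "t \<in> {0..T}"
    using grid_in_interval[OF assms(1), of n N] grid_in_interval[OF assms(1), of "Suc n" N] by auto
qed

lemma abs_integral_diff_const_le:
  fixes f :: "real \<Rightarrow> real"
  assumes "a \<le> b" "continuous_on {a..b} f" "\<And>s. s \<in> {a..b} \<Longrightarrow> \<bar>f s - c\<bar> \<le> d"
  shows "\<bar>integral {a..b} f - (b - a) * c\<bar> \<le> (b - a) * d"
proof -
  have "integral {a..b} (\<lambda>s. f s - c) = integral {a..b} f - (b - a) * c"
    using assms integrable_continuous_real by (subst integral_diff) auto
  moreover have "norm (integral {a..b} (\<lambda>s. f s - c)) \<le> d * (b - a)"
    using assms by (intro integral_bound) (auto intro: continuous_intros)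
  ultimately show ?thesis by (simp add: mult.commute)
qed

lemma integral_equation_increment:
  fixes f x w :: "real \<Rightarrow> real"
  assumes "0 \<le> a" "a \<le> b" "continuous_on {0..b} f"
    and "x a = x0 - integral {0..a} f + w a" "x b = x0 - integral {0..b} f + w b"
  shows "x b = x a - integral {a..b} f + (w b - w a)"
proof -
  have "integral {0..a} f + integral {a..b} f = integral {0..b} f"
    using assms
    by (intro Henstock_Kurzweil_Integration.integral_combine integrable_continuous_real) auto
  then show ?thesis using assms by linarith
qed

lemma abs_power3_diff_le:
  fixes a b M :: real
  assumes "\<bar>a\<bar> \<le> M" "\<bar>b\<bar> \<le> M"
  shows "\<bar>a ^ 3 - b ^ 3\<bar> \<le> 3 * M\<^sup>2 * \<bar>a - b\<bar>"
proof -
  have "\<bar>a\<^sup>2 + a * b + b\<^sup>2\<bar> \<le> \<bar>a\<bar>\<^sup>2 + \<bar>a\<bar> * \<bar>b\<bar> + \<bar>b\<bar>\<^sup>2"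
    by (simp add: abs_mult order_trans[OF abs_triangle_ineq])
  also have "\<dots> \<le> M\<^sup>2 + M * M + M\<^sup>2"
    using assms by (intro add_mono mult_mono power_mono) auto
  finally have "\<bar>a\<^sup>2 + a * b + b\<^sup>2\<bar> \<le> 3 * M\<^sup>2" by (simp add: power2_eq_square)
  moreover have "a ^ 3 - b ^ 3 = (a - b) * (a\<^sup>2 + a * b + b\<^sup>2)"
    by (simp add: power2_eq_square power3_eq_cube algebra_simps)
  ultimately show ?thesis by (simp add: abs_mult mult_left_mono mult.commute)
qed

lemma discrete_gronwall_bounded:
  fixes e :: "nat \<Rightarrow> real" and K m :: nat and L h \<delta> B :: real
  defines "C \<equiv> real K * h * \<delta> * exp (L * (real K * h))"
  assumes "e 0 = 0" "0 \<le> L" "0 \<le> h" "0 \<le> \<delta>" "C \<le> B"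
    and step: "\<And>n. n < K \<Longrightarrow> \<bar>e n\<bar> \<le> B \<Longrightarrow> \<bar>e (Suc n)\<bar> \<le> (1 + L * h) * \<bar>e n\<bar> + h * \<delta>"
    and "m \<le> K"
  shows "\<bar>e m\<bar> \<le> C"
proof -
  have bound: "real n * h * \<delta> * (1 + L * h) ^ n \<le> C" if "n \<le> K" for n
  proof -
    have "(1 + L * h) ^ n \<le> exp (L * h) ^ n"
      using assms by (intro power_mono) (auto simp: exp_ge_add_one_self)
    also have "\<dots> = exp (real n * (L * h))" by (simp add: exp_of_nat_mult)
    also have "\<dots> \<le> exp (L * (real K * h))"
      using assms that mult_right_mono[of "real n" "real K" "L * h"] by (simp add: mult_ac)
    finally show ?thesis
      unfolding C_def using assms that by (intro mult_mono) (auto intro: mult_right_mono)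
  qed
  have "\<bar>e n\<bar> \<le> real n * h * \<delta> * (1 + L * h) ^ n" if "n \<le> K" for n
    using that
  proof (induction n)
    case 0
    then show ?case using assms by simp
  next
    case (Suc n)
    then have "\<bar>e n\<bar> \<le> B" using bound[of n] assms by auto
    then have "\<bar>e (Suc n)\<bar> \<le> (1 + L * h) * \<bar>e n\<bar> + h * \<delta>"
      using Suc step by simp
    also have "\<dots> \<le> (1 + L * h) * (real n * h * \<delta> * (1 + L * h) ^ n) + h * \<delta>"
      using Suc assms by (intro add_right_mono mult_left_mono) auto
    also have "\<dots> \<le> real (Suc n) * h * \<delta> * (1 + L * h) ^ Suc n"
    proof -
      have "h * \<delta> * 1 \<le> h * \<delta> * (1 + L * h) ^ Suc n"
        using assms by (intro mult_left_mono one_le_power) auto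
      then show ?thesis by (simp add: algebra_simps)
    qed
    finally show ?case .
  qed
  then show ?thesis using bound \<open>m \<le> K\<close> by (meson order_trans)
qed

lemma euler_step_error_le:
  fixes x w :: "real \<Rightarrow> real"
  assumes "0 \<le> h" "continuous_on {a..a + h} x"
    and cube_close: "\<And>s. s \<in> {a..a + h} \<Longrightarrow> \<bar>x s ^ 3 - x a ^ 3\<bar> \<le> \<delta>"
    and x_step: "x (a + h) = x a - integral {a..a + h} (\<lambda>s. x s ^ 3) + (w (a + h) - w a)"
    and "\<bar>x a\<bar> \<le> M" "\<bar>z\<bar> \<le> M"
  shows "\<bar>x (a + h) - (z + (w (a + h) - w a - z ^ 3 * h))\<bar>
           \<le> (1 + 3 * M\<^sup>2 * h) * \<bar>x a - z\<bar> + h * \<delta>"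
proof -
  have "\<bar>integral {a..a + h} (\<lambda>s. x s ^ 3) - h * x a ^ 3\<bar> \<le> h * \<delta>"
    using abs_integral_diff_const_le[of a "a + h" "\<lambda>s. x s ^ 3"] assms
    by (auto intro!: continuous_intros)
  moreover have "\<bar>h * (x a ^ 3 - z ^ 3)\<bar> \<le> h * (3 * M\<^sup>2 * \<bar>x a - z\<bar>)"
    using abs_power3_diff_le[of "x a" M z] assms by (simp add: abs_mult mult_left_mono)
  ultimately show ?thesis unfolding x_step by (simp add: algebra_simps)
qed

lemma compact_subset_decreasing_family:
  fixes D :: "real \<Rightarrow> 'a::topological_space set" and T :: real
  assumes "0 < T" and "compact K"
    and mono: "\<And>t1 t2. 0 < t1 \<Longrightarrow> t1 \<le> t2 \<Longrightarrow> t2 \<le> T \<Longrightarrow> D t2 \<subseteq> D t1"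
    and cover: "(\<Union>t\<in>{0<..T}. interior (D t)) = UNIV"
  obtains t0 where "0 < t0" "t0 \<le> T" "\<And>h. 0 < h \<Longrightarrow> h \<le> t0 \<Longrightarrow> K \<subseteq> D h"
proof -
  obtain I where I: "I \<subseteq> {0<..T}" "finite I" "K \<subseteq> (\<Union>t\<in>I. interior (D t))"
    using compactE_image[OF \<open>compact K\<close>, of "{0<..T}" "\<lambda>t. interior (D t)"] cover by auto
  show ?thesis
  proof (cases "I = {}")
    case True
    then show ?thesis using that[of T] I \<open>0 < T\<close> by auto
  next
    case False
    have "Min I \<in> I" using False I by auto
    moreover have "K \<subseteq> D h" if "0 < h" "h \<le> Min I" for h
    proof
      fix z assume "z \<in> K"
      then obtain t where t: "t \<in> I" "z \<in> interior (D t)" using I by auto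
      moreover have "h \<le> t" using that Min_le[OF \<open>finite I\<close> t(1)] by linarith
      moreover have "t \<le> T" using I t by auto
      ultimately have "D t \<subseteq> D h" using mono that by blast
      then show "z \<in> D h" using t interior_subset by blast
    qed
    ultimately show ?thesis using that[of "Min I"] I by auto
  qed
qed

lemma bounded_real_abs_le:
  fixes S :: "real set"
  assumes "bounded S"
  obtains R where "0 \<le> R" "\<And>x. x \<in> S \<Longrightarrow> \<bar>x\<bar> \<le> R"
proof -
  obtain a where "\<And>x. x \<in> S \<Longrightarrow> \<bar>x\<bar> \<le> a" using assms by (auto simp: bounded_iff)
  then show ?thesis using that[of "max a 0"] by fastforce
qed

lemma uniformly_continuous_on_Icc_real:
  fixes f :: "real \<Rightarrow> real"
  assumes "continuous_on {a..b} f" "0 < e"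
  obtains d where "0 < d" "\<And>s s'. s \<in> {a..b} \<Longrightarrow> s' \<in> {a..b} \<Longrightarrow> \<bar>s' - s\<bar> < d \<Longrightarrow> \<bar>f s' - f s\<bar> < e"
  using compact_uniformly_continuous[OF assms(1) compact_Icc] assms(2) that
  unfolding uniformly_continuous_on_def dist_real_def by metis

text \<open>A single sample path. The integral equation is only required at grid points: these are
  countably many, so it holds there simultaneously almost surely.\<close>

locale tamed_euler_path =
  fixes T :: real and x w :: "real \<Rightarrow> real" and D :: "real \<Rightarrow> real set"
    and y :: "nat \<Rightarrow> real \<Rightarrow> real"
  assumes T_pos: "0 < T"
    and x_cont: "continuous_on {0..T} x" and w_cont: "continuous_on {0..T} w"
    and x_eq_grid: "\<And>N n. 1 \<le> N \<Longrightarrow> n \<le> N \<Longrightarrow>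
          x (grid T N n) = x 0 - integral {0..grid T N n} (\<lambda>s. x s ^ 3) + w (grid T N n)"
    and D_mono: "\<And>t1 t2. 0 < t1 \<Longrightarrow> t1 \<le> t2 \<Longrightarrow> t2 \<le> T \<Longrightarrow> D t2 \<subseteq> D t1"
    and D_cover: "(\<Union>t\<in>{0<..T}. interior (D t)) = UNIV"
    and y_0: "\<And>N. 1 \<le> N \<Longrightarrow> y N 0 = x 0"
    and y_step: "\<And>N n t. 1 \<le> N \<Longrightarrow> n < N \<Longrightarrow> t \<in> {grid T N n..grid T N (Suc n)} \<Longrightarrow>
          y N t = y N (grid T N n) + indicator (D (T / real N)) (y N (grid T N n))
            * (w t - w (grid T N n) - y N (grid T N n) ^ 3 * (t - grid T N n))"
begin

lemma x_step_grid:
  assumes "1 \<le> N" "n < N"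
  shows "x (grid T N (Suc n)) = x (grid T N n) - integral {grid T N n..grid T N (Suc n)} (\<lambda>s. x s ^ 3)
           + (w (grid T N (Suc n)) - w (grid T N n))"
proof (rule integral_equation_increment)
  have "grid T N (Suc n) \<in> {0..T}" using grid_in_interval T_pos assms by simp
  then show "continuous_on {0..grid T N (Suc n)} (\<lambda>s. x s ^ 3)"
    by (intro continuous_intros continuous_on_subset[OF x_cont]) auto
qed (use assms T_pos grid_in_interval grid_less_Suc x_eq_grid in \<open>auto intro: less_imp_le\<close>)

lemma y_step_in_D:
  assumes "1 \<le> N" "n < N" "t \<in> {grid T N n..grid T N (Suc n)}" "y N (grid T N n) \<in> D (T / real N)"
  shows "y N t = y N (grid T N n) + (w t - w (grid T N n) - y N (grid T N n) ^ 3 * (t - grid T N n))"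
  using y_step[OF assms(1-3)] assms(4) by simp

lemma grid_error_le:
  fixes R \<delta> :: real
  defines "L \<equiv> 3 * (R + 1)\<^sup>2"
  assumes N: "1 \<le> N" and "n \<le> N"
    and x_bound: "\<And>s. s \<in> {0..T} \<Longrightarrow> \<bar>x s\<bar> \<le> R"
    and D_ball: "cball 0 (R + 1) \<subseteq> D (T / real N)"
    and "0 \<le> \<delta>"
    and cube_close: "\<And>s s'. s \<in> {0..T} \<Longrightarrow> s' \<in> {0..T} \<Longrightarrow> \<bar>s' - s\<bar> \<le> T / real N \<Longrightarrow>
          \<bar>x s' ^ 3 - x s ^ 3\<bar> \<le> \<delta>"
    and small: "T * \<delta> * exp (L * T) \<le> 1"
  shows "\<bar>x (grid T N n) - y N (grid T N n)\<bar> \<le> T * \<delta> * exp (L * T)"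
proof -
  define h where "h = T / real N"
  have h: "0 < h" "real N * h = T" unfolding h_def using T_pos N by auto
  have "\<bar>x (grid T N n) - y N (grid T N n)\<bar> \<le> real N * h * \<delta> * exp (L * (real N * h))"
  proof (rule discrete_gronwall_bounded[where e = "\<lambda>n. x (grid T N n) - y N (grid T N n)" and B = 1])
    fix k assume k: "k < N" and err: "\<bar>x (grid T N k) - y N (grid T N k)\<bar> \<le> 1"
    define a where "a = grid T N k"
    have a: "a \<in> {0..T}" "a + h \<in> {0..T}" "grid T N (Suc k) = a + h"
      using grid_in_interval[OF T_pos, of k N] grid_in_interval[OF T_pos, of "Suc k" N] k
      by (simp_all add: a_def h_def grid_Suc)
    have x_a: "\<bar>x a\<bar> \<le> R + 1" using x_bound a by force
    have y_a: "\<bar>y N a\<bar> \<le> R + 1" using x_bound[OF a(1)] err unfolding a_def by linarith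
    then have "y N a \<in> D h" using D_ball unfolding h_def by auto
    then have y_next: "y N (a + h) = y N a + (w (a + h) - w a - y N a ^ 3 * h)"
      using y_step_in_D[OF N k, of "a + h"] a unfolding a_def h_def by auto
    have "\<bar>x (a + h) - y N (a + h)\<bar> \<le> (1 + L * h) * \<bar>x a - y N a\<bar> + h * \<delta>"
      unfolding y_next L_def
    proof (rule euler_step_error_le[where x = x and z = "y N a"])
      have sub: "{a..a + h} \<subseteq> {0..T}" using a by auto
      show "continuous_on {a..a + h} x" using continuous_on_subset[OF x_cont sub] .
      show "0 \<le> h" "\<bar>x a\<bar> \<le> R + 1" "\<bar>y N a\<bar> \<le> R + 1" using h x_a y_a by auto
      show "\<bar>x s ^ 3 - x a ^ 3\<bar> \<le> \<delta>" if "s \<in> {a..a + h}" for s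
        using cube_close[of a s] that sub a unfolding h_def by auto
      show "x (a + h) = x a - integral {a..a + h} (\<lambda>s. x s ^ 3) + (w (a + h) - w a)"
        using x_step_grid[OF N k] a unfolding a_def by simp
    qed
    then show "\<bar>x (grid T N (Suc k)) - y N (grid T N (Suc k))\<bar>
        \<le> (1 + L * h) * \<bar>x (grid T N k) - y N (grid T N k)\<bar> + h * \<delta>"
      using a unfolding a_def by simp
  qed (use N y_0 h small \<open>n \<le> N\<close> \<open>0 \<le> \<delta>\<close> in \<open>auto simp: L_def\<close>)
  then show ?thesis using h by simp
qed

lemma error_between_grid_le:
  assumes N: "1 \<le> N" "n < N" and s: "s \<in> {grid T N n..grid T N (Suc n)}"
    and y_bound: "\<bar>y N (grid T N n)\<bar> \<le> M" and D_ball: "cball 0 M \<subseteq> D (T / real N)"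
  shows "\<bar>x s - y N s\<bar> \<le> \<bar>x s - x (grid T N n)\<bar> + \<bar>x (grid T N n) - y N (grid T N n)\<bar>
           + \<bar>w s - w (grid T N n)\<bar> + M ^ 3 * (T / real N)"
proof -
  define a where "a = grid T N n"
  have "y N a \<in> D (T / real N)" using y_bound D_ball unfolding a_def by auto
  then have y_s: "y N s = y N a + (w s - w a - y N a ^ 3 * (s - a))"
    using y_step_in_D[OF N s] unfolding a_def by simp
  have "0 \<le> s - a" "s - a \<le> T / real N" using s unfolding a_def by (auto simp: grid_Suc)
  moreover have "\<bar>y N a\<bar> ^ 3 \<le> M ^ 3" using y_bound unfolding a_def by (intro power_mono) auto
  ultimately have "\<bar>y N a\<bar> ^ 3 * (s - a) \<le> M ^ 3 * (T / real N)"
    using y_bound by (intro mult_mono) auto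
  then have "\<bar>y N a ^ 3 * (s - a)\<bar> \<le> M ^ 3 * (T / real N)"
    using \<open>0 \<le> s - a\<close> by (simp add: abs_mult power_abs)
  then show ?thesis unfolding y_s a_def[symmetric] by linarith
qed

lemma uniform_convergence:
  assumes "0 < \<epsilon>"
  shows "\<forall>\<^sub>F N in sequentially. \<forall>s\<in>{0..T}. \<bar>x s - y N s\<bar> \<le> \<epsilon>"
proof -
  have "bounded (x ` {0..T})"
    by (intro compact_imp_bounded compact_continuous_image x_cont compact_Icc)
  then obtain R where R0: "0 \<le> R" "\<And>y. y \<in> x ` {0..T} \<Longrightarrow> \<bar>y\<bar> \<le> R"
    by (rule bounded_real_abs_le) blast
  note R = R0(1) R0(2)[OF imageI]
  define L where "L = 3 * (R + 1)\<^sup>2"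
  obtain t0 where t0: "0 < t0" "t0 \<le> T" "\<And>h. 0 < h \<Longrightarrow> h \<le> t0 \<Longrightarrow> cball 0 (R + 1) \<subseteq> D h"
    using compact_subset_decreasing_family[OF T_pos compact_cball[of 0 "R + 1"] D_mono D_cover] by blast
  define \<delta> where "\<delta> = min 1 (\<epsilon> / 4) / (T * exp (L * T))"
  have \<delta>: "0 < \<delta>" "T * \<delta> * exp (L * T) = min 1 (\<epsilon> / 4)"
    unfolding \<delta>_def using T_pos assms by auto
  obtain d1 where d1: "0 < d1" "\<And>s s'. s \<in> {0..T} \<Longrightarrow> s' \<in> {0..T} \<Longrightarrow> \<bar>s' - s\<bar> < d1 \<Longrightarrow>
      \<bar>x s' ^ 3 - x s ^ 3\<bar> < \<delta>"
    using uniformly_continuous_on_Icc_real[OF continuous_on_power[OF x_cont] \<delta>(1)] by blast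
  obtain d2 where d2: "0 < d2" "\<And>s s'. s \<in> {0..T} \<Longrightarrow> s' \<in> {0..T} \<Longrightarrow> \<bar>s' - s\<bar> < d2 \<Longrightarrow>
      \<bar>x s' - x s\<bar> < \<epsilon> / 4"
    using uniformly_continuous_on_Icc_real[OF x_cont, of "\<epsilon> / 4"] assms by auto
  obtain d3 where d3: "0 < d3" "\<And>s s'. s \<in> {0..T} \<Longrightarrow> s' \<in> {0..T} \<Longrightarrow> \<bar>s' - s\<bar> < d3 \<Longrightarrow>
      \<bar>w s' - w s\<bar> < \<epsilon> / 4"
    using uniformly_continuous_on_Icc_real[OF w_cont, of "\<epsilon> / 4"] assms by auto
  \<comment> \<open>below the step size \<open>hm\<close> each of the four error terms of
      \<open>error_between_grid_le\<close> is at most \<open>\<epsilon> / 4\<close>\<close>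
  define hm where "hm = min (min d1 d2) (min (min d3 t0) (\<epsilon> / (4 * (R + 1) ^ 3)))"
  have "0 < hm" unfolding hm_def using d1 d2 d3 t0 assms R by auto
  then have "\<forall>\<^sub>F N in sequentially. 1 \<le> N \<and> T / real N < hm"
    using eventually_ge_at_top[of 1] order_tendstoD(2)[OF lim_const_over_n[of T]] eventually_conj by blast
  then show ?thesis
  proof (rule eventually_mono, safe)
    fix N s assume N: "1 \<le> N" "T / real N < hm" and s: "s \<in> {0..T}"
    have D_ball: "cball 0 (R + 1) \<subseteq> D (T / real N)"
      using t0 N T_pos unfolding hm_def by auto
    obtain n where n: "n < N" "s \<in> {grid T N n..grid T N (Suc n)}"
      using grid_interval_containing[OF T_pos N(1) s] .
    define a where "a = grid T N n"
    have a: "a \<in> {0..T}" "\<bar>s - a\<bar> < hm"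
      using grid_in_interval[OF T_pos, of n N] n N unfolding a_def by (auto simp: grid_Suc)
    have err: "\<bar>x a - y N a\<bar> \<le> min 1 (\<epsilon> / 4)"
      unfolding a_def \<delta>(2)[symmetric] L_def
    proof (rule grid_error_le[OF N(1) _ R(2) D_ball])
      show "\<bar>x s' ^ 3 - x s ^ 3\<bar> \<le> \<delta>"
        if "s \<in> {0..T}" "s' \<in> {0..T}" "\<bar>s' - s\<bar> \<le> T / real N" for s s'
        using d1(2)[OF that(1,2)] that(3) N(2) unfolding hm_def by force
      show "T * \<delta> * exp (3 * (R + 1)\<^sup>2 * T) \<le> 1" using \<delta>(2) unfolding L_def by simp
    qed (use n \<delta>(1) in auto)
    have "\<bar>y N (grid T N n)\<bar> \<le> R + 1" using R(2)[OF a(1)] err unfolding a_def by linarith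
    from error_between_grid_le[OF N(1) n(1) n(2) this D_ball]
    have "\<bar>x s - y N s\<bar> \<le> \<bar>x s - x a\<bar> + \<bar>x a - y N a\<bar> + \<bar>w s - w a\<bar> + (R + 1) ^ 3 * (T / real N)"
      unfolding a_def .
    moreover have "\<bar>x s - x a\<bar> < \<epsilon> / 4" "\<bar>w s - w a\<bar> < \<epsilon> / 4"
      using d2(2)[OF a(1) s] d3(2)[OF a(1) s] a(2) unfolding hm_def by auto
    moreover have "(R + 1) ^ 3 * (T / real N) \<le> (R + 1) ^ 3 * (\<epsilon> / (4 * (R + 1) ^ 3))"
      using N(2) R(1) unfolding hm_def by (intro mult_left_mono) auto
    moreover have "(R + 1) ^ 3 * (\<epsilon> / (4 * (R + 1) ^ 3)) = \<epsilon> / 4"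
      using R(1) by simp
    ultimately show "\<bar>x s - y N s\<bar> \<le> \<epsilon>" using err by linarith
  qed
qed

end


section \<open>Gaussian estimates\<close>

lemma normal_density_abs_antimono:
  assumes "0 < \<sigma>" "\<bar>g\<bar> \<le> B"
  shows "normal_density 0 \<sigma> B \<le> normal_density 0 \<sigma> g"
proof -
  have "g\<^sup>2 \<le> B\<^sup>2" using assms abs_le_square_iff by fastforce
  then show ?thesis using assms unfolding normal_density_def by (auto intro!: divide_right_mono)
qed

lemma distributed_normal_emeasure_ge:
  assumes G: "distributed M lborel G (\<lambda>x. ennreal (normal_density 0 \<sigma> x))" and "0 < \<sigma>"
    and A: "A \<in> sets borel" and bound: "\<And>g. g \<in> A \<Longrightarrow> \<bar>g\<bar> \<le> B"
  shows "ennreal (normal_density 0 \<sigma> B) * emeasure lborel A \<le> emeasure M {\<omega>\<in>space M. G \<omega> \<in> A}"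
proof -
  have "ennreal (normal_density 0 \<sigma> B) * emeasure lborel A
      = (\<integral>\<^sup>+g. ennreal (normal_density 0 \<sigma> B) * indicator A g \<partial>lborel)"
    using A by (simp add: nn_integral_cmult_indicator)
  also have "\<dots> \<le> (\<integral>\<^sup>+g. ennreal (normal_density 0 \<sigma> g) * indicator A g \<partial>lborel)"
    using normal_density_abs_antimono[OF \<open>0 < \<sigma>\<close> bound]
    by (intro nn_integral_mono) (auto split: split_indicator intro: ennreal_leI)
  also have "\<dots> = emeasure M {\<omega>\<in>space M. G \<omega> \<in> A}"
    using distributed_emeasure[OF G] A by (simp add: vimage_def Int_def conj_commute)
  finally show ?thesis .
qed

lemma exp_powr_normal_density_unbounded:
  assumes p: "0 < p" and q: "2 < q" and \<sigma>: "0 < \<sigma>" and c: "0 \<le> c"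
  obtains r where "c < r" "K \<le> exp (p * (r - c) powr q) * normal_density 0 \<sigma> (r + 1)"
proof -
  define k where "k = 1 / sqrt (2 * pi * \<sigma>\<^sup>2)"
  have k: "0 < k" unfolding k_def using \<sigma> by auto
  define M where "M = (2 / \<sigma>\<^sup>2 + 1) / p"
  have M: "0 < M" "p * M = 2 / \<sigma>\<^sup>2 + 1"
    unfolding M_def using p \<sigma> by (auto intro!: divide_pos_pos add_pos_pos)
  define v where "v = max (c + 1) (max (M powr (1 / (q - 2))) (\<bar>ln (K / k)\<bar> + 1))"
  have v: "c + 1 \<le> v" "M powr (1 / (q - 2)) \<le> v" "\<bar>ln (K / k)\<bar> + 1 \<le> v" "1 \<le> v"
    unfolding v_def using c by auto
  have "M = (M powr (1 / (q - 2))) powr (q - 2)" using M q by (simp add: powr_powr)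
  also have "\<dots> \<le> v powr (q - 2)" using v M q by (intro powr_mono2) auto
  finally have "2 / \<sigma>\<^sup>2 + 1 \<le> p * v powr (q - 2)"
    unfolding M(2)[symmetric] using p by (rule mult_left_mono[OF _ less_imp_le])
  then have "v\<^sup>2 * (2 / \<sigma>\<^sup>2 + 1) \<le> v\<^sup>2 * (p * v powr (q - 2))"
    by (rule mult_left_mono) simp
  also have "v\<^sup>2 * (p * v powr (q - 2)) = p * (v powr 2 * v powr (q - 2))"
    using v(4) by (simp add: powr_numeral)
  also have "\<dots> = p * v powr q" by (simp flip: powr_add)
  finally have main: "v\<^sup>2 * (2 / \<sigma>\<^sup>2) + v\<^sup>2 \<le> p * v powr q"
    by (simp only: distrib_left mult_1_right)
  define r where "r = v + c"
  have "(r + 1)\<^sup>2 \<le> (2 * v)\<^sup>2" unfolding r_def using v c by (intro power_mono) auto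
  then have "(r + 1)\<^sup>2 / (2 * \<sigma>\<^sup>2) \<le> (2 * v)\<^sup>2 / (2 * \<sigma>\<^sup>2)"
    by (rule divide_right_mono) simp
  also have "\<dots> = v\<^sup>2 * (2 / \<sigma>\<^sup>2)" by (simp add: power_mult_distrib)
  finally have "(r + 1)\<^sup>2 / (2 * \<sigma>\<^sup>2) \<le> v\<^sup>2 * (2 / \<sigma>\<^sup>2)" .
  moreover have "v \<le> v\<^sup>2" using v(4) power_increasing[of 1 2 v] by simp
  ultimately have ln_le: "ln (K / k) \<le> p * v powr q - (r + 1)\<^sup>2 / (2 * \<sigma>\<^sup>2)"
    using main v(3) abs_ge_self[of "ln (K / k)"] by linarith
  have "K / k \<le> exp (p * v powr q - (r + 1)\<^sup>2 / (2 * \<sigma>\<^sup>2))"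
  proof (cases "0 < K")
    case True
    then show ?thesis using ln_le k by (metis exp_le_cancel_iff exp_ln divide_pos_pos)
  next
    case False
    then have "K / k \<le> 0" using k by (simp add: divide_nonpos_pos)
    then show ?thesis by (meson exp_gt_zero less_imp_le order.trans)
  qed
  then have "K \<le> k * exp (p * v powr q - (r + 1)\<^sup>2 / (2 * \<sigma>\<^sup>2))"
    using k by (simp add: divide_le_eq mult.commute)
  also have "\<dots> = exp (p * v powr q) * normal_density 0 \<sigma> (r + 1)"
    unfolding normal_density_def k_def by (simp add: exp_diff exp_minus field_simps)
  finally have "K \<le> exp (p * (r - c) powr q) * normal_density 0 \<sigma> (r + 1)" by (simp add: r_def)
  moreover have "c < r" using v unfolding r_def by linarith
  ultimately show ?thesis by (rule that[rotated])
qed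

lemma emeasure_lborel_translate:
  assumes "S \<in> sets borel"
  shows "emeasure lborel {g::real. a + g \<in> S} = emeasure lborel S"
proof -
  have "emeasure lborel S = emeasure (distr lborel borel ((+) a)) S" by (simp add: lborel_distr_plus)
  also have "\<dots> = emeasure lborel {g. a + g \<in> S}"
    using assms by (subst emeasure_distr) (auto simp: vimage_def)
  finally show ?thesis ..
qed

lemma bounded_image_continuous:
  fixes \<phi> :: "'a::heine_borel \<Rightarrow> 'b::metric_space"
  assumes "continuous_on UNIV \<phi>" "bounded S"
  shows "bounded (\<phi> ` S)"
proof (rule bounded_closure_image)
  have "compact (\<phi> ` closure S)"
    using assms by (intro compact_continuous_image continuous_on_subset[OF assms(1)]) auto
  then show "bounded (\<phi> ` closure S)" by (rule compact_imp_bounded)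
qed

lemma indep_normal_shift_hits_pos:
  fixes Z G :: "'a \<Rightarrow> real" and \<phi> :: "real \<Rightarrow> real"
  assumes "prob_space M" and indep: "prob_space.indep_var M lborel Z lborel G"
    and G: "distributed M lborel G (\<lambda>x. ennreal (normal_density 0 \<sigma> x))" and "0 < \<sigma>"
    and \<phi>: "\<phi> \<in> borel_measurable borel"
    and S: "S \<in> sets borel" "bounded S" "bounded (\<phi> ` S)"
    and pos: "0 < emeasure lborel S" "0 < emeasure M {\<omega>\<in>space M. Z \<omega> \<in> S}"
  shows "0 < emeasure M {\<omega>\<in>space M. Z \<omega> \<in> S \<and> \<phi> (Z \<omega>) + G \<omega> \<in> S}"
proof -
  interpret prob_space M by fact
  obtain R where R: "\<And>x. x \<in> S \<Longrightarrow> \<bar>x\<bar> \<le> R" using bounded_real_abs_le[OF S(2)] by metis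
  obtain R' where "\<And>y. y \<in> \<phi> ` S \<Longrightarrow> \<bar>y\<bar> \<le> R'" using bounded_real_abs_le[OF S(3)] by metis
  then have R': "\<And>z. z \<in> S \<Longrightarrow> \<bar>\<phi> z\<bar> \<le> R'" by blast
  define c where "c = normal_density 0 \<sigma> (R + R')"
  have [measurable]: "Z \<in> borel_measurable M" "G \<in> borel_measurable M" "\<phi> \<in> borel_measurable borel"
    using indep_var_rv1[OF indep] indep_var_rv2[OF indep] \<phi> by simp_all
  define C where "C = {x \<in> space (lborel \<Otimes>\<^sub>M lborel). fst x \<in> S \<and> \<phi> (fst x) + snd x \<in> S}"
  have C: "C \<in> sets (lborel \<Otimes>\<^sub>M lborel)"
    unfolding C_def sets_pair_measure_cong[OF sets_lborel sets_lborel] space_pair_measure using S(1) by measurable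
  have sf: "sigma_finite_measure (distr M lborel G)"
    by (simp add: prob_space_distr prob_space_imp_sigma_finite)
  have "emeasure M {\<omega>\<in>space M. Z \<omega> \<in> S \<and> \<phi> (Z \<omega>) + G \<omega> \<in> S}
      = emeasure (distr M (lborel \<Otimes>\<^sub>M lborel) (\<lambda>\<omega>. (Z \<omega>, G \<omega>))) C"
    using C by (subst emeasure_distr) (auto simp: C_def space_pair_measure intro!: arg_cong[where f = "emeasure M"])
  also have "\<dots> = emeasure (distr M lborel Z \<Otimes>\<^sub>M distr M lborel G) C"
    using indep unfolding indep_var_distribution_eq by simp
  also have "\<dots> = (\<integral>\<^sup>+z. emeasure (distr M lborel G) (Pair z -` C) \<partial>distr M lborel Z)"
    using C by (intro sigma_finite_measure.emeasure_pair_measure_alt[OF sf]) simp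
  also have "\<dots> \<ge> (\<integral>\<^sup>+z. ennreal c * emeasure lborel S * indicator S z \<partial>distr M lborel Z)"
  proof (intro nn_integral_mono)
    fix z
    show "ennreal c * emeasure lborel S * indicator S z \<le> emeasure (distr M lborel G) (Pair z -` C)"
    proof (cases "z \<in> S")
      case True
      have slice: "Pair z -` C = {g. \<phi> z + g \<in> S}" using True by (auto simp: C_def space_pair_measure)
      have Sz: "{g. \<phi> z + g \<in> S} \<in> sets borel" using S(1) by measurable
      moreover have "\<bar>g\<bar> \<le> R + R'" if "g \<in> {g. \<phi> z + g \<in> S}" for g
        using R[of "\<phi> z + g"] R'[OF True] that by auto
      ultimately have "ennreal c * emeasure lborel {g. \<phi> z + g \<in> S}
          \<le> emeasure M {\<omega>\<in>space M. G \<omega> \<in> {g. \<phi> z + g \<in> S}}"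
        unfolding c_def by (rule distributed_normal_emeasure_ge[OF G \<open>0 < \<sigma>\<close>])
      moreover have "emeasure (distr M lborel G) (Pair z -` C) = emeasure M {\<omega>\<in>space M. G \<omega> \<in> {g. \<phi> z + g \<in> S}}"
        unfolding slice using Sz by (subst emeasure_distr) (auto intro!: arg_cong[where f = "emeasure M"])
      ultimately show ?thesis using True by (simp add: emeasure_lborel_translate[OF S(1)])
    qed simp
  qed
  also have "(\<integral>\<^sup>+z. ennreal c * emeasure lborel S * indicator S z \<partial>distr M lborel Z)
      = ennreal c * emeasure lborel S * emeasure M {\<omega>\<in>space M. Z \<omega> \<in> S}"
    using S(1) by (simp add: nn_integral_cmult_indicator emeasure_distr vimage_def Int_def conj_commute)
  finally have "ennreal c * emeasure lborel S * emeasure M {\<omega>\<in>space M. Z \<omega> \<in> S}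
      \<le> emeasure M {\<omega>\<in>space M. Z \<omega> \<in> S \<and> \<phi> (Z \<omega>) + G \<omega> \<in> S}" .
  moreover have "0 < ennreal c * emeasure lborel S * emeasure M {\<omega>\<in>space M. Z \<omega> \<in> S}"
    using pos normal_density_pos[OF \<open>0 < \<sigma>\<close>] by (simp add: c_def ennreal_zero_less_mult_iff)
  ultimately show ?thesis by (rule order.strict_trans2[rotated])
qed

lemma nn_integral_exp_powr_indep_normal_infinite:
  fixes Z G V :: "'a \<Rightarrow> real" and \<phi> :: "real \<Rightarrow> real"
  assumes "prob_space M" and indep: "prob_space.indep_var M lborel Z lborel G"
    and G: "distributed M lborel G (\<lambda>x. ennreal (normal_density 0 \<sigma> x))" and "0 < \<sigma>"
    and S: "S \<in> sets borel" "bounded (\<phi> ` S)" and pos: "0 < emeasure M {\<omega>\<in>space M. Z \<omega> \<in> S}"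
    and V: "\<And>\<omega>. \<omega> \<in> space M \<Longrightarrow> Z \<omega> \<in> S \<Longrightarrow> V \<omega> = \<phi> (Z \<omega>) + G \<omega>"
    and "0 < p" "2 < q"
  shows "(\<integral>\<^sup>+\<omega>. ennreal (exp (p * \<bar>V \<omega>\<bar> powr q)) \<partial>M) = \<infinity>"
proof -
  interpret prob_space M by fact
  obtain c where c: "0 \<le> c" "\<And>y. y \<in> \<phi> ` S \<Longrightarrow> \<bar>y\<bar> \<le> c"
    using bounded_real_abs_le[OF S(2)] by metis
  have [measurable]: "Z \<in> borel_measurable M" "G \<in> borel_measurable M"
    using indep_var_rv1[OF indep] indep_var_rv2[OF indep] by simp_all
  define \<pi> where "\<pi> = prob {\<omega>\<in>space M. Z \<omega> \<in> S}"
  have \<pi>: "0 < \<pi>" using pos unfolding \<pi>_def by (simp add: emeasure_eq_measure)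
  have lower: "ennreal (exp (p * (r - c) powr q) * normal_density 0 \<sigma> (r + 1) * \<pi>)
      \<le> (\<integral>\<^sup>+\<omega>. ennreal (exp (p * \<bar>V \<omega>\<bar> powr q)) \<partial>M)" if "c < r" for r
  proof -
    define e where "e = exp (p * (r - c) powr q)"
    define E where "E = {\<omega>\<in>space M. Z \<omega> \<in> S \<and> G \<omega> \<in> {r..r + 1}}"
    have E: "E \<in> sets M" unfolding E_def using S(1) by measurable
    have "e \<le> exp (p * \<bar>V \<omega>\<bar> powr q)" if "\<omega> \<in> E" for \<omega>
    proof -
      have "r - c \<le> V \<omega>" using that c(2)[of "\<phi> (Z \<omega>)"] V[of \<omega>] unfolding E_def by auto
      then have "(r - c) powr q \<le> \<bar>V \<omega>\<bar> powr q" using \<open>c < r\<close> \<open>2 < q\<close> by (intro powr_mono2) auto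
      then show ?thesis unfolding e_def using \<open>0 < p\<close> by simp
    qed
    then have int_ge: "ennreal e * emeasure M E \<le> (\<integral>\<^sup>+\<omega>. ennreal (exp (p * \<bar>V \<omega>\<bar> powr q)) \<partial>M)"
      using E by (subst nn_integral_cmult_indicator[symmetric]) (auto intro!: nn_integral_mono ennreal_leI split: split_indicator)
    have E_eq: "emeasure M E = ennreal (prob {\<omega>\<in>space M. G \<omega> \<in> {r..r + 1}}) * ennreal \<pi>"
      using indep_varD[OF indep, of S "{r..r + 1}"] S(1) \<pi> unfolding E_def \<pi>_def
      by (simp add: emeasure_eq_measure vimage_def Int_def conj_commute ennreal_mult mult.commute)
    have G_ge: "ennreal (normal_density 0 \<sigma> (r + 1)) \<le> ennreal (prob {\<omega>\<in>space M. G \<omega> \<in> {r..r + 1}})"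
      using distributed_normal_emeasure_ge[OF G \<open>0 < \<sigma>\<close>, of "{r..r + 1}" "r + 1"] \<open>c < r\<close> c(1)
      by (simp add: emeasure_eq_measure)
    have "ennreal (e * normal_density 0 \<sigma> (r + 1) * \<pi>)
        = ennreal e * (ennreal (normal_density 0 \<sigma> (r + 1)) * ennreal \<pi>)"
      using \<pi> unfolding e_def by (simp add: ennreal_mult mult.assoc)
    also have "\<dots> \<le> ennreal e * emeasure M E"
      unfolding E_eq using G_ge by (intro mult_left_mono mult_right_mono) auto
    also note int_ge
    finally show ?thesis unfolding e_def .
  qed
  show ?thesis
  proof (rule ccontr)
    assume "(\<integral>\<^sup>+\<omega>. ennreal (exp (p * \<bar>V \<omega>\<bar> powr q)) \<partial>M) \<noteq> \<infinity>"
    then obtain y where y: "(\<integral>\<^sup>+\<omega>. ennreal (exp (p * \<bar>V \<omega>\<bar> powr q)) \<partial>M) = ennreal y" "0 \<le> y"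
      using ennreal_cases by auto
    obtain r where r: "c < r" "(y + 1) / \<pi> \<le> exp (p * (r - c) powr q) * normal_density 0 \<sigma> (r + 1)"
      using exp_powr_normal_density_unbounded[OF \<open>0 < p\<close> \<open>2 < q\<close> \<open>0 < \<sigma>\<close> c(1)] by blast
    have "y + 1 \<le> exp (p * (r - c) powr q) * normal_density 0 \<sigma> (r + 1) * \<pi>"
      using r(2) \<pi> by (simp add: divide_le_eq)
    also have "\<dots> \<le> y" using lower[OF r(1)] y by (simp add: ennreal_le_iff)
    finally show False by simp
  qed
qed

lemma incseq_emeasure_pos:
  assumes "range A \<subseteq> sets M" "incseq A" "0 < emeasure M (\<Union>n. A n)"
  obtains n where "0 < emeasure M (A n)"
proof -
  have "0 < (SUP n. emeasure M (A n))" using assms SUP_emeasure_incseq[OF assms(1,2)] by simp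
  then show ?thesis using that by (auto simp: less_SUP_iff)
qed

lemma bounded_subset_emeasure_pos:
  fixes Z :: "'a \<Rightarrow> real"
  assumes A: "A \<in> sets borel" and Z: "Z \<in> borel_measurable M"
    and pos: "0 < emeasure lborel A" "0 < emeasure M {\<omega>\<in>space M. Z \<omega> \<in> A}"
  obtains m :: nat where "0 < emeasure lborel (A \<inter> {-m..m})"
    "0 < emeasure M {\<omega>\<in>space M. Z \<omega> \<in> A \<inter> {-m..m}}"
proof -
  define B where "B m = A \<inter> {- real m..real m}" for m
  have "\<exists>m. - real m \<le> x \<and> x \<le> real m" for x :: real
  proof -
    obtain m :: nat where "\<bar>x\<bar> \<le> real m" using real_arch_simple by blast
    then show ?thesis by (intro exI[of _ m]) (auto simp: abs_le_iff)
  qed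
  then have B: "range B \<subseteq> sets borel" "incseq B" "(\<Union>m. B m) = A"
    using A by (auto simp: B_def incseq_def)
  obtain m1 where m1: "0 < emeasure lborel (B m1)"
    using incseq_emeasure_pos[of B lborel] B pos(1) by (auto simp: sets_lborel)
  have ZB: "range (\<lambda>m. {\<omega>\<in>space M. Z \<omega> \<in> B m}) \<subseteq> sets M" "incseq (\<lambda>m. {\<omega>\<in>space M. Z \<omega> \<in> B m})"
    using B(1,2) measurable_sets[OF Z] by (auto simp: incseq_def vimage_def Int_def conj_commute)
  have "(\<Union>m. {\<omega>\<in>space M. Z \<omega> \<in> B m}) = {\<omega>\<in>space M. Z \<omega> \<in> A}" using B(3) by auto
  then have "0 < emeasure M (\<Union>m. {\<omega>\<in>space M. Z \<omega> \<in> B m})" using pos(2) by simp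
  then obtain m2 where m2: "0 < emeasure M {\<omega>\<in>space M. Z \<omega> \<in> B m2}"
    using incseq_emeasure_pos[OF ZB] by blast
  have "emeasure lborel (B m1) \<le> emeasure lborel (B (max m1 m2))"
    "emeasure M {\<omega>\<in>space M. Z \<omega> \<in> B m2} \<le> emeasure M {\<omega>\<in>space M. Z \<omega> \<in> B (max m1 m2)}"
    using monoD[OF B(2), of m1 "max m1 m2"] monoD[OF B(2), of m2 "max m1 m2"] B(1) ZB(1)
    by (auto intro!: emeasure_mono)
  then show ?thesis using that[of "max m1 m2"] m1 m2 unfolding B_def by auto
qed

lemma measure_tendsto_0_if_AE_eventually_notin:
  assumes "prob_space M" and A: "\<And>K. A K \<in> sets M"
    and ae: "AE \<omega> in M. \<forall>\<^sub>F K in sequentially. \<omega> \<notin> A K"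
  shows "(\<lambda>K. measure M (A K)) \<longlonglongrightarrow> 0"
proof -
  interpret prob_space M by fact
  define B where "B K = (\<Union>j\<in>{K..}. A j)" for K
  have B: "range B \<subseteq> sets M" "decseq B"
    using A by (auto simp: B_def decseq_def) (meson atLeast_iff order_trans)
  obtain N where N: "N \<in> null_sets M" "{\<omega>\<in>space M. \<not> (\<forall>\<^sub>F K in sequentially. \<omega> \<notin> A K)} \<subseteq> N"
    using ae unfolding eventually_ae_filter by auto
  have "(\<Inter>K. B K) \<subseteq> {\<omega>\<in>space M. \<not> (\<forall>\<^sub>F K in sequentially. \<omega> \<notin> A K)}"
  proof
    fix \<omega> assume \<omega>: "\<omega> \<in> (\<Inter>K. B K)"
    then have "\<forall>K0. \<exists>j\<ge>K0. \<omega> \<in> A j" unfolding B_def by auto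
    then have "\<not> (\<forall>\<^sub>F K in sequentially. \<omega> \<notin> A K)" unfolding eventually_sequentially by blast
    moreover have "\<omega> \<in> space M" using \<omega> A[THEN sets.sets_into_space] unfolding B_def by blast
    ultimately show "\<omega> \<in> {\<omega>\<in>space M. \<not> (\<forall>\<^sub>F K in sequentially. \<omega> \<notin> A K)}" by simp
  qed
  then have "(\<Inter>K. B K) \<subseteq> N" using N(2) by (rule subset_trans)
  moreover have "(\<Inter>K. B K) \<in> sets M" using B(1) by auto
  ultimately have "(\<Inter>K. B K) \<in> null_sets M" using null_sets_subset[OF N(1)] by blast
  then have lim: "(\<lambda>K. measure M (B K)) \<longlonglongrightarrow> 0"
    using finite_Lim_measure_decseq[OF B] by (simp add: measure_eq_0_null_sets)
  have "measure M (A K) \<le> measure M (B K)" for K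
    using B(1) A unfolding B_def by (intro finite_measure_mono) auto
  then show ?thesis
    by (intro tendsto_sandwich[OF _ _ tendsto_const lim] always_eventually) auto
qed

lemma less_cSUP_iff_Rats:
  fixes f :: "real \<Rightarrow> real"
  assumes "a < b" "continuous_on {a..b} f"
  shows "p < (SUP s\<in>{a..b}. f s) \<longleftrightarrow> (\<exists>r\<in>\<rat> \<inter> {a..b}. p < f r)"
proof -
  have "bdd_above (f ` {a..b})"
    using compact_continuous_image[OF assms(2) compact_Icc] by (auto dest: compact_imp_bounded bounded_imp_bdd_above)
  then have "p < (SUP s\<in>{a..b}. f s) \<longleftrightarrow> (\<exists>s\<in>{a..b}. p < f s)"
    using assms(1) by (simp add: less_cSUP_iff)
  also have "\<dots> \<longleftrightarrow> (\<exists>r\<in>\<rat> \<inter> {a..b}. p < f r)"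
  proof safe
    fix s assume s: "s \<in> {a..b}" "p < f s"
    then obtain d where d: "0 < d" "\<And>s'. s' \<in> {a..b} \<Longrightarrow> dist s' s < d \<Longrightarrow> dist (f s') (f s) < f s - p"
      using assms(2) unfolding continuous_on_iff by (metis diff_gt_0_iff_gt)
    obtain r where r: "r \<in> \<rat>" "max a (s - d) < r" "r < min b (s + d)"
      using Rats_dense_in_real[of "max a (s - d)" "min b (s + d)"] s d(1) assms(1) by auto
    then have r_ab: "r \<in> {a..b}" "dist r s < d" by (auto simp: dist_real_def)
    then have "p < f r" using d(2)[OF r_ab] by (auto simp: dist_real_def)
    then show "\<exists>r\<in>\<rat> \<inter> {a..b}. p < f r" using r(1) r_ab by blast
  qed auto
  finally show ?thesis .
qed


section \<open>The tamed Euler scheme driven by Brownian motion\<close>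

locale tamed_euler_scheme =
  fixes P :: "'a measure" and F :: "real \<Rightarrow> 'a measure" and T :: real
    and W X :: "real \<Rightarrow> 'a \<Rightarrow> real" and D :: "real \<Rightarrow> real set"
    and Y :: "nat \<Rightarrow> real \<Rightarrow> 'a \<Rightarrow> real"
  assumes T_pos: "0 < T"
    and basis: "stochastic_basis P F T"
    and BM: "std_brownian_motion P F T W"
    and X_adapted: "\<And>t. t \<in> {0..T} \<Longrightarrow> X t \<in> borel_measurable (F t)"
    and X_cont: "\<And>\<omega>. \<omega> \<in> space P \<Longrightarrow> continuous_on {0..T} (\<lambda>t. X t \<omega>)"
    and X_eq: "\<And>t. t \<in> {0..T} \<Longrightarrow>
          AE \<omega> in P. X t \<omega> = X 0 \<omega> - integral {0..t} (\<lambda>s. X s \<omega> ^ 3) + W t \<omega>"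
    and D_borel: "\<And>t. t \<in> {0<..T} \<Longrightarrow> D t \<in> sets borel"
    and D_mono: "\<And>t1 t2. 0 < t1 \<Longrightarrow> t1 \<le> t2 \<Longrightarrow> t2 \<le> T \<Longrightarrow> D t2 \<subseteq> D t1"
    and D_cover: "(\<Union>t\<in>{0<..T}. interior (D t)) = UNIV"
    and Y_0: "\<And>N \<omega>. 1 \<le> N \<Longrightarrow> \<omega> \<in> space P \<Longrightarrow> Y N 0 \<omega> = X 0 \<omega>"
    and Y_step: "\<And>N n t \<omega>. 1 \<le> N \<Longrightarrow> n < N \<Longrightarrow> t \<in> {grid T N n..grid T N (Suc n)} \<Longrightarrow>
          \<omega> \<in> space P \<Longrightarrow> Y N t \<omega> = Y N (grid T N n) \<omega>
            + indicator (D (T / real N)) (Y N (grid T N n) \<omega>)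
              * (W t \<omega> - W (grid T N n) \<omega> - Y N (grid T N n) \<omega> ^ 3 * (t - grid T N n))"
begin

sublocale prob_space P
  using basis unfolding stochastic_basis_def by auto

lemma subalgebra_F: "t \<in> {0..T} \<Longrightarrow> subalgebra P (F t)"
  using basis unfolding stochastic_basis_def by auto

lemma space_F: "t \<in> {0..T} \<Longrightarrow> space (F t) = space P"
  using subalgebra_F unfolding subalgebra_def by auto

lemma measurable_F_mono:
  assumes "0 \<le> s" "s \<le> t" "t \<le> T" "f \<in> borel_measurable (F s)"
  shows "f \<in> borel_measurable (F t)"
proof (rule measurable_from_subalg[OF _ assms(4)])
  have "sets (F s) \<subseteq> sets (F t)" using basis assms unfolding stochastic_basis_def by auto
  then show "subalgebra (F t) (F s)"
    using subalgebra_F[of s] subalgebra_F[of t] assms unfolding subalgebra_def by auto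
qed

lemma measurable_F_imp_P: "t \<in> {0..T} \<Longrightarrow> f \<in> borel_measurable (F t) \<Longrightarrow> f \<in> borel_measurable P"
  using measurable_from_subalg subalgebra_F by blast

lemma W_adapted: "t \<in> {0..T} \<Longrightarrow> W t \<in> borel_measurable (F t)"
  using BM unfolding std_brownian_motion_def by auto

lemma W_cont: "\<omega> \<in> space P \<Longrightarrow> continuous_on {0..T} (\<lambda>t. W t \<omega>)"
  using BM unfolding std_brownian_motion_def by auto

lemma W_increment_normal:
  "0 \<le> s \<Longrightarrow> s < t \<Longrightarrow> t \<le> T \<Longrightarrow>
    distributed P lborel (\<lambda>\<omega>. W t \<omega> - W s \<omega>) (\<lambda>x. ennreal (normal_density 0 (sqrt (t - s)) x))"
  using BM unfolding std_brownian_motion_def by blast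

lemma indep_var_W_increment:
  assumes st: "0 \<le> s" "s < t" "t \<le> T" and Z: "Z \<in> borel_measurable (F s)"
  shows "indep_var lborel Z lborel (\<lambda>\<omega>. W t \<omega> - W s \<omega>)"
proof -
  have [measurable]: "Z \<in> borel_measurable P" "(\<lambda>\<omega>. W t \<omega> - W s \<omega>) \<in> borel_measurable P"
    using measurable_F_imp_P[OF _ Z] measurable_F_imp_P[OF _ W_adapted, of s] measurable_F_imp_P[OF _ W_adapted, of t] st
    by auto
  have "distr P lborel Z \<Otimes>\<^sub>M distr P lborel (\<lambda>\<omega>. W t \<omega> - W s \<omega>)
      = distr P (lborel \<Otimes>\<^sub>M lborel) (\<lambda>\<omega>. (Z \<omega>, W t \<omega> - W s \<omega>))"
  proof (rule pair_measure_eqI)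
    fix A B assume "A \<in> sets (distr P lborel Z)" "B \<in> sets (distr P lborel (\<lambda>\<omega>. W t \<omega> - W s \<omega>))"
    then have AB: "A \<in> sets borel" "B \<in> sets borel" by auto
    have "{\<omega>\<in>space (F s). Z \<omega> \<in> A} \<in> sets (F s)" using Z AB by measurable
    then have "{\<omega>\<in>space P. Z \<omega> \<in> A} \<in> sets (F s)"
      using subalgebra_F[of s] st unfolding subalgebra_def by auto
    then have "prob ({\<omega>\<in>space P. Z \<omega> \<in> A} \<inter> {\<omega>\<in>space P. W t \<omega> - W s \<omega> \<in> B})
        = prob {\<omega>\<in>space P. Z \<omega> \<in> A} * prob {\<omega>\<in>space P. W t \<omega> - W s \<omega> \<in> B}"
      using BM st AB unfolding std_brownian_motion_def by blast
    moreover have "{\<omega>\<in>space P. Z \<omega> \<in> A} \<inter> {\<omega>\<in>space P. W t \<omega> - W s \<omega> \<in> B}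
        = {\<omega>\<in>space P. Z \<omega> \<in> A \<and> W t \<omega> - W s \<omega> \<in> B}" by auto
    ultimately have "prob {\<omega>\<in>space P. Z \<omega> \<in> A \<and> W t \<omega> - W s \<omega> \<in> B}
        = prob {\<omega>\<in>space P. Z \<omega> \<in> A} * prob {\<omega>\<in>space P. W t \<omega> - W s \<omega> \<in> B}" by simp
    then show "emeasure (distr P lborel Z) A * emeasure (distr P lborel (\<lambda>\<omega>. W t \<omega> - W s \<omega>)) B
        = emeasure (distr P (lborel \<Otimes>\<^sub>M lborel) (\<lambda>\<omega>. (Z \<omega>, W t \<omega> - W s \<omega>))) (A \<times> B)"
      using AB by (simp add: emeasure_distr emeasure_eq_measure ennreal_mult[symmetric] vimage_def Int_def conj_commute)
  qed (simp_all add: prob_space_distr prob_space_imp_sigma_finite)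
  then show ?thesis by (simp add: indep_var_distribution_eq)
qed

lemma D_step_borel: "1 \<le> N \<Longrightarrow> D (T / real N) \<in> sets borel"
  using D_borel T_pos by (simp add: divide_le_eq)

lemma measurable_F_cong:
  assumes "t \<in> {0..T}" "g \<in> borel_measurable (F t)" "\<And>\<omega>. \<omega> \<in> space P \<Longrightarrow> f \<omega> = g \<omega>"
  shows "f \<in> borel_measurable (F t)"
  using assms(2) by (subst measurable_cong[where g = g]) (use assms space_F in auto)

lemma Y_step_adapted:
  assumes N: "1 \<le> N" "n < N" and t: "t \<in> {grid T N n..grid T N (Suc n)}"
    and Y_n: "Y N (grid T N n) \<in> borel_measurable (F (grid T N n))"
  shows "Y N t \<in> borel_measurable (F t)"
proof -
  have g: "0 \<le> grid T N n" "grid T N n \<le> t" "t \<le> T"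
    using grid_in_interval[OF T_pos, of n N] grid_in_interval[OF T_pos, of "Suc n" N] N t by auto
  have [measurable]: "Y N (grid T N n) \<in> borel_measurable (F t)" "W (grid T N n) \<in> borel_measurable (F t)"
      "W t \<in> borel_measurable (F t)" "D (T / real N) \<in> sets borel"
    using measurable_F_mono[OF g Y_n] measurable_F_mono[OF g W_adapted] W_adapted[of t] D_step_borel[OF N(1)] g
    by auto
  have "(\<lambda>\<omega>. Y N (grid T N n) \<omega> + indicator (D (T / real N)) (Y N (grid T N n) \<omega>)
      * (W t \<omega> - W (grid T N n) \<omega> - Y N (grid T N n) \<omega> ^ 3 * (t - grid T N n))) \<in> borel_measurable (F t)"
    by measurable
  moreover have "t \<in> {0..T}" using g by simp
  ultimately show ?thesis using measurable_F_cong Y_step[OF N t] by blast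
qed

lemma Y_grid_adapted: "1 \<le> N \<Longrightarrow> k \<le> N \<Longrightarrow> Y N (grid T N k) \<in> borel_measurable (F (grid T N k))"
proof (induction k)
  case 0
  show ?case
    unfolding grid_0
    by (rule measurable_F_cong[of 0 "X 0"]) (use X_adapted[of 0] T_pos Y_0[OF \<open>1 \<le> N\<close>] in auto)
next
  case (Suc k)
  then have k: "k < N" by simp
  have "grid T N (Suc k) \<in> {grid T N k..grid T N (Suc k)}"
    using grid_less_Suc[OF T_pos \<open>1 \<le> N\<close>, of k] by simp
  then show ?case
    using Y_step_adapted[OF Suc.prems(1) k] Suc.IH[OF Suc.prems(1) less_imp_le[OF k]] by blast
qed

lemma Y_adapted:
  assumes "1 \<le> N" "t \<in> {0..T}"
  shows "Y N t \<in> borel_measurable (F t)"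
proof -
  obtain n where n: "n < N" "t \<in> {grid T N n..grid T N (Suc n)}"
    using grid_interval_containing[OF T_pos assms] .
  show ?thesis using Y_step_adapted[OF assms(1) n Y_grid_adapted[OF assms(1)]] n(1) by simp
qed

lemma Y_cont:
  assumes N: "1 \<le> N" and \<omega>: "\<omega> \<in> space P"
  shows "continuous_on {0..T} (\<lambda>t. Y N t \<omega>)"
  unfolding grid_intervals_cover[OF T_pos N]
proof (rule continuous_on_closed_Union)
  fix n assume "n \<in> {..<N}"
  then have n: "n < N" by simp
  have "{grid T N n..grid T N (Suc n)} \<subseteq> {0..T}" using grid_intervals_cover[OF T_pos N] n by blast
  then have "continuous_on {grid T N n..grid T N (Suc n)} (\<lambda>t. W t \<omega>)"
    by (rule continuous_on_subset[OF W_cont[OF \<omega>]])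
  then have "continuous_on {grid T N n..grid T N (Suc n)} (\<lambda>t. Y N (grid T N n) \<omega>
      + indicator (D (T / real N)) (Y N (grid T N n) \<omega>)
        * (W t \<omega> - W (grid T N n) \<omega> - Y N (grid T N n) \<omega> ^ 3 * (t - grid T N n)))"
    by (intro continuous_on_add continuous_on_mult_left continuous_on_diff continuous_on_const continuous_on_id)
  then show "continuous_on {grid T N n..grid T N (Suc n)} (\<lambda>t. Y N t \<omega>)"
    by (rule continuous_on_eq) (rule Y_step[OF N n _ \<omega>, symmetric])
qed simp_all

lemma AE_X_eq_grid:
  "AE \<omega> in P. \<forall>N n. 1 \<le> N \<longrightarrow> n \<le> N \<longrightarrow>
     X (grid T N n) \<omega> = X 0 \<omega> - integral {0..grid T N n} (\<lambda>s. X s \<omega> ^ 3) + W (grid T N n) \<omega>"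
  unfolding AE_all_countable
proof (intro allI)
  fix N n :: nat
  show "AE \<omega> in P. 1 \<le> N \<longrightarrow> n \<le> N \<longrightarrow>
      X (grid T N n) \<omega> = X 0 \<omega> - integral {0..grid T N n} (\<lambda>s. X s \<omega> ^ 3) + W (grid T N n) \<omega>"
  proof (cases "n \<le> N")
    case True
    from X_eq[OF grid_in_interval[OF T_pos True]] show ?thesis by (rule eventually_mono) simp
  qed simp
qed

lemma tamed_euler_path_at:
  assumes "\<omega> \<in> space P"
    and "\<forall>N n. 1 \<le> N \<longrightarrow> n \<le> N \<longrightarrow>
       X (grid T N n) \<omega> = X 0 \<omega> - integral {0..grid T N n} (\<lambda>s. X s \<omega> ^ 3) + W (grid T N n) \<omega>"
  shows "tamed_euler_path T (\<lambda>s. X s \<omega>) (\<lambda>s. W s \<omega>) D (\<lambda>N s. Y N s \<omega>)"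
proof unfold_locales
  fix N n t assume "1 \<le> N" "n < N" "t \<in> {grid T N n..grid T N (Suc n)}"
  then show "Y N t \<omega> = Y N (grid T N n) \<omega> + indicator (D (T / real N)) (Y N (grid T N n) \<omega>)
      * (W t \<omega> - W (grid T N n) \<omega> - Y N (grid T N n) \<omega> ^ 3 * (t - grid T N n))"
    by (rule Y_step[OF _ _ _ assms(1)])
qed (use assms T_pos X_cont W_cont D_mono D_cover Y_0 in auto)

lemma sup_error_event_sets:
  assumes "1 \<le> N"
  shows "{\<omega>\<in>space P. p < (SUP s\<in>{0..T}. \<bar>X s \<omega> - Y N s \<omega>\<bar>)} \<in> sets P"
proof -
  have "p < (SUP s\<in>{0..T}. \<bar>X s \<omega> - Y N s \<omega>\<bar>) \<longleftrightarrow> (\<exists>r\<in>\<rat> \<inter> {0..T}. p < \<bar>X r \<omega> - Y N r \<omega>\<bar>)"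
    if "\<omega> \<in> space P" for \<omega>
    using less_cSUP_iff_Rats[OF T_pos, of "\<lambda>s. \<bar>X s \<omega> - Y N s \<omega>\<bar>"] X_cont[OF that] Y_cont[OF assms that]
    by (simp add: continuous_on_rabs continuous_on_diff)
  then have "{\<omega>\<in>space P. p < (SUP s\<in>{0..T}. \<bar>X s \<omega> - Y N s \<omega>\<bar>)}
      = {\<omega>\<in>space P. \<exists>r\<in>\<rat> \<inter> {0..T}. p < \<bar>X r \<omega> - Y N r \<omega>\<bar>}" by auto
  also have "\<dots> \<in> sets P"
  proof (rule sets.sets_Collect_countable_Ex')
    fix r assume "r \<in> \<rat> \<inter> {0..T}"
    then have [measurable]: "X r \<in> borel_measurable P" "Y N r \<in> borel_measurable P"
      using measurable_F_imp_P X_adapted Y_adapted[OF assms] by auto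
    show "{\<omega>\<in>space P. p < \<bar>X r \<omega> - Y N r \<omega>\<bar>} \<in> sets P" by measurable
  qed (simp add: countable_rat)
  finally show ?thesis .
qed

lemma sup_error_tendsto_0:
  assumes "0 < p"
  shows "(\<lambda>N. prob {\<omega>\<in>space P. p < (SUP s\<in>{0..T}. \<bar>X s \<omega> - Y N s \<omega>\<bar>)}) \<longlonglongrightarrow> 0"
proof -
  define A where "A N = {\<omega>\<in>space P. p < (SUP s\<in>{0..T}. \<bar>X s \<omega> - Y (Suc N) s \<omega>\<bar>)}" for N
  have "AE \<omega> in P. \<forall>\<^sub>F N in sequentially. \<omega> \<notin> A N"
    using AE_X_eq_grid
  proof (rule AE_mp[OF _ AE_I2], intro impI)
    fix \<omega> assume \<omega>: "\<omega> \<in> space P" and grid_eq: "\<forall>N n. 1 \<le> N \<longrightarrow> n \<le> N \<longrightarrow>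
       X (grid T N n) \<omega> = X 0 \<omega> - integral {0..grid T N n} (\<lambda>s. X s \<omega> ^ 3) + W (grid T N n) \<omega>"
    interpret path: tamed_euler_path T "\<lambda>s. X s \<omega>" "\<lambda>s. W s \<omega>" D "\<lambda>N s. Y N s \<omega>"
      by (rule tamed_euler_path_at[OF \<omega> grid_eq])
    have "\<forall>\<^sub>F N in sequentially. \<forall>s\<in>{0..T}. \<bar>X s \<omega> - Y N s \<omega>\<bar> \<le> p / 2"
      using path.uniform_convergence[of "p / 2"] assms by simp
    then have "\<forall>\<^sub>F N in sequentially. \<forall>s\<in>{0..T}. \<bar>X s \<omega> - Y (Suc N) s \<omega>\<bar> \<le> p / 2"
      by (rule eventually_sequentially_Suc[where P = "\<lambda>N. \<forall>s\<in>{0..T}. \<bar>X s \<omega> - Y N s \<omega>\<bar> \<le> p / 2", THEN iffD2])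
    then show "\<forall>\<^sub>F N in sequentially. \<omega> \<notin> A N"
    proof (rule eventually_mono)
      fix N assume "\<forall>s\<in>{0..T}. \<bar>X s \<omega> - Y (Suc N) s \<omega>\<bar> \<le> p / 2"
      then have "(SUP s\<in>{0..T}. \<bar>X s \<omega> - Y (Suc N) s \<omega>\<bar>) \<le> p / 2"
        using T_pos by (intro cSUP_least) auto
      then show "\<omega> \<notin> A N" unfolding A_def using assms by auto
    qed
  qed
  then have "(\<lambda>N. prob (A N)) \<longlonglongrightarrow> 0"
    using sup_error_event_sets unfolding A_def
    by (intro measure_tendsto_0_if_AE_eventually_notin) (auto simp: prob_space_axioms)
  then show ?thesis
    unfolding A_def by (rule LIMSEQ_imp_Suc)
qed

lemma Y_grid_in_set_pos:
  assumes N: "1 \<le> N" and S: "S \<in> sets borel" "bounded S" "S \<subseteq> D (T / real N)"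
    and pos: "0 < emeasure lborel S" "0 < emeasure P {\<omega>\<in>space P. X 0 \<omega> \<in> S}"
  shows "k \<le> N \<Longrightarrow> 0 < emeasure P {\<omega>\<in>space P. Y N (grid T N k) \<omega> \<in> S}"
proof (induction k)
  case 0
  have "{\<omega>\<in>space P. Y N (grid T N 0) \<omega> \<in> S} = {\<omega>\<in>space P. X 0 \<omega> \<in> S}"
    using Y_0[OF N] by auto
  then show ?case using pos(2) by simp
next
  case (Suc k)
  then have k: "k < N" by simp
  define a where "a = grid T N k"
  define b where "b = grid T N (Suc k)"
  define \<phi> where "\<phi> z = z - z ^ 3 * (b - a)" for z
  have ab: "0 \<le> a" "a < b" "b \<le> T" "b \<in> {a..b}"
    using grid_in_interval[OF T_pos, of k N] grid_in_interval[OF T_pos, of "Suc k" N] k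
      grid_less_Suc[OF T_pos N, of k] unfolding a_def b_def by auto
  have "continuous_on UNIV \<phi>" unfolding \<phi>_def by (intro continuous_intros)
  then have \<phi>: "\<phi> \<in> borel_measurable borel" "bounded (\<phi> ` S)"
    using borel_measurable_continuous_onI bounded_image_continuous[OF _ S(2)] by auto
  have "0 < emeasure P {\<omega>\<in>space P. Y N a \<omega> \<in> S \<and> \<phi> (Y N a \<omega>) + (W b \<omega> - W a \<omega>) \<in> S}"
  proof (rule indep_normal_shift_hits_pos[OF prob_space_axioms _ _ _ \<phi>(1) S(1,2) \<phi>(2) pos(1)])
    show "indep_var lborel (Y N a) lborel (\<lambda>\<omega>. W b \<omega> - W a \<omega>)"
      using indep_var_W_increment[OF ab(1-3) Y_grid_adapted[OF N less_imp_le[OF k], folded a_def]] .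
    show "distributed P lborel (\<lambda>\<omega>. W b \<omega> - W a \<omega>) (\<lambda>x. ennreal (normal_density 0 (sqrt (b - a)) x))"
      using W_increment_normal[OF ab(1-3)] .
    show "0 < emeasure P {\<omega>\<in>space P. Y N a \<omega> \<in> S}"
      using Suc.IH k unfolding a_def by simp
  qed (use ab in auto)
  also have "\<dots> \<le> emeasure P {\<omega>\<in>space P. Y N b \<omega> \<in> S}"
  proof (rule emeasure_mono)
    have "b \<in> {0..T}" using ab by simp
    then have [measurable]: "Y N b \<in> borel_measurable P"
      using measurable_F_imp_P Y_adapted[OF N] by blast
    show "{\<omega>\<in>space P. Y N b \<omega> \<in> S} \<in> sets P" using S(1) by measurable
    show "{\<omega>\<in>space P. Y N a \<omega> \<in> S \<and> \<phi> (Y N a \<omega>) + (W b \<omega> - W a \<omega>) \<in> S}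
        \<subseteq> {\<omega>\<in>space P. Y N b \<omega> \<in> S}"
    proof safe
      fix \<omega> assume \<omega>: "\<omega> \<in> space P" "Y N a \<omega> \<in> S" "\<phi> (Y N a \<omega>) + (W b \<omega> - W a \<omega>) \<in> S"
      have "Y N b \<omega> = \<phi> (Y N a \<omega>) + (W b \<omega> - W a \<omega>)"
        using Y_step[OF N k _ \<omega>(1), of b] ab(4) \<omega>(2) S(3) unfolding a_def[symmetric] b_def[symmetric] \<phi>_def
        by (auto simp: indicator_def)
      then show "Y N b \<omega> \<in> S" using \<omega>(3) by simp
    qed
  qed
  finally show ?case unfolding b_def .
qed

lemma nn_integral_exp_Y_infinite:
  assumes N: "1 \<le> N" and t: "t \<in> {0<..T}"
    and S: "S \<in> sets borel" "bounded S" "S \<subseteq> D (T / real N)"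
    and pos: "0 < emeasure lborel S" "0 < emeasure P {\<omega>\<in>space P. X 0 \<omega> \<in> S}"
    and "0 < p" "2 < q"
  shows "(\<integral>\<^sup>+\<omega>. ennreal (exp (p * \<bar>Y N t \<omega>\<bar> powr q)) \<partial>P) = \<infinity>"
proof -
  obtain n where n: "n < N" "grid T N n < t" "t \<le> grid T N (Suc n)"
    using grid_interval_containing_right[OF T_pos N t] .
  define a where "a = grid T N n"
  have a: "0 \<le> a" "a < t" "t \<le> T" "t \<in> {a..grid T N (Suc n)}"
    using grid_in_interval[OF T_pos, of n N] n t unfolding a_def by auto
  define \<phi> where "\<phi> z = z - z ^ 3 * (t - a)" for z
  show ?thesis
  proof (rule nn_integral_exp_powr_indep_normal_infinite[OF prob_space_axioms _ _ _ S(1)])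
    show "indep_var lborel (Y N a) lborel (\<lambda>\<omega>. W t \<omega> - W a \<omega>)"
      using indep_var_W_increment[OF a(1-3) Y_grid_adapted[OF N less_imp_le[OF n(1)], folded a_def]] .
    show "distributed P lborel (\<lambda>\<omega>. W t \<omega> - W a \<omega>) (\<lambda>x. ennreal (normal_density 0 (sqrt (t - a)) x))"
      using W_increment_normal[OF a(1-3)] .
    have "continuous_on UNIV \<phi>" unfolding \<phi>_def by (intro continuous_intros)
    then show "bounded (\<phi> ` S)" using bounded_image_continuous[OF _ S(2)] by blast
    show "0 < emeasure P {\<omega>\<in>space P. Y N a \<omega> \<in> S}"
      using Y_grid_in_set_pos[OF N S pos] n(1) unfolding a_def by simp
    show "Y N t \<omega> = \<phi> (Y N a \<omega>) + (W t \<omega> - W a \<omega>)" if "\<omega> \<in> space P" "Y N a \<omega> \<in> S" for \<omega>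
      using Y_step[OF N n(1) a(4)[unfolded a_def] that(1)] that(2) S(3) unfolding a_def[symmetric] \<phi>_def
      by (auto simp: indicator_def)
  qed (use a \<open>0 < p\<close> \<open>2 < q\<close> in auto)
qed

end


theorem lemma5p1:
  fixes P :: "'a measure" and F :: "real \<Rightarrow> 'a measure" and T :: real
    and W X :: "real \<Rightarrow> 'a \<Rightarrow> real" and \<epsilon> :: real
    and D :: "real \<Rightarrow> real set" and Y :: "nat \<Rightarrow> real \<Rightarrow> 'a \<Rightarrow> real"
  assumes T_pos: "0 < T"
    and basis: "stochastic_basis P F T"
    and BM: "std_brownian_motion P F T W"
    and X_adapted: "\<forall>t\<in>{0..T}. X t \<in> borel_measurable (F t)"
    and X_cont: "\<forall>\<omega>\<in>space P. continuous_on {0..T} (\<lambda>t. X t \<omega>)"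
    and X_eq: "\<forall>t\<in>{0..T}. AE \<omega> in P.
                 X t \<omega> = X 0 \<omega> - integral {0..t} (\<lambda>s. (X s \<omega>) ^ 3) + W t \<omega>"
    and eps: "0 < \<epsilon>" "\<epsilon> \<le> 1/2"
    and X0_exp: "(\<integral>\<^sup>+ \<omega>. ennreal (exp (\<epsilon> * \<bar>X 0 \<omega>\<bar> ^ 4)) \<partial>P) < \<infinity>"
    and D_borel: "\<forall>t\<in>{0<..T}. D t \<in> sets borel"
    and D_mono: "\<forall>t1 t2. 0 < t1 \<and> t1 \<le> t2 \<and> t2 \<le> T \<longrightarrow> D t2 \<subseteq> D t1"
    and D_pos: "emeasure lborel (D T) * emeasure P {\<omega>\<in>space P. X 0 \<omega> \<in> D T} > 0"
    and D_cover: "(\<Union>t\<in>{0<..T}. interior (D t)) = UNIV"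
    and Y_0: "\<forall>N\<ge>1. \<forall>\<omega>\<in>space P. Y N 0 \<omega> = X 0 \<omega>"
    and Y_step: "\<forall>N\<ge>1. \<forall>n<N. \<forall>t\<in>{real n * T / real N .. real (n + 1) * T / real N}.
                  \<forall>\<omega>\<in>space P.
                   Y N t \<omega> = Y N (real n * T / real N) \<omega>
                     + indicator (D (T / real N)) (Y N (real n * T / real N) \<omega>)
                       * (W t \<omega> - W (real n * T / real N) \<omega>
                          - (Y N (real n * T / real N) \<omega>) ^ 3 * (t - real n * T / real N))"
  shows "\<forall>t\<in>{0<..T}. \<forall>N\<ge>1. \<forall>p>0. \<forall>q>2.
           ((\<lambda>K. measure P {\<omega>\<in>space P. (SUP s\<in>{0..T}. \<bar>X s \<omega> - Y K s \<omega>\<bar>) > p})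
              \<longlonglongrightarrow> 0)
           \<and> (\<integral>\<^sup>+ \<omega>. ennreal (exp (p * \<bar>Y N t \<omega>\<bar> powr q)) \<partial>P) = \<infinity>"
proof -
  interpret tamed_euler_scheme P F T W X D Y
  proof unfold_locales
    fix N n t \<omega> assume "1 \<le> N" "n < N" "t \<in> {grid T N n..grid T N (Suc n)}" "\<omega> \<in> space P"
    then show "Y N t \<omega> = Y N (grid T N n) \<omega> + indicator (D (T / real N)) (Y N (grid T N n) \<omega>)
        * (W t \<omega> - W (grid T N n) \<omega> - Y N (grid T N n) \<omega> ^ 3 * (t - grid T N n))"
      unfolding grid_def Suc_eq_plus1 by (rule Y_step[rule_format])
  qed (use T_pos basis BM X_adapted X_cont X_eq D_borel D_mono D_cover Y_0 in auto)
  have "X 0 \<in> borel_measurable P" using measurable_F_imp_P[OF _ X_adapted[of 0]] T_pos by simp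
  then obtain m :: nat where S: "0 < emeasure lborel (D T \<inter> {-m..m})"
      "0 < emeasure P {\<omega>\<in>space P. X 0 \<omega> \<in> D T \<inter> {-m..m}}"
    using bounded_subset_emeasure_pos[of "D T"] D_borel D_pos T_pos by (auto simp: ennreal_zero_less_mult_iff)
  show ?thesis
  proof (intro ballI allI impI conjI)
    fix p :: real assume "0 < p"
    then show "(\<lambda>K. prob {\<omega>\<in>space P. (SUP s\<in>{0..T}. \<bar>X s \<omega> - Y K s \<omega>\<bar>) > p}) \<longlonglongrightarrow> 0"
      by (rule sup_error_tendsto_0)
  next
    fix t p q :: real and N :: nat assume "t \<in> {0<..T}" "1 \<le> N" "0 < p" "2 < q"
    moreover have "D T \<inter> {-m..m} \<subseteq> D (T / real N)"
      using D_mono[of "T / real N" T] T_pos \<open>1 \<le> N\<close> by (auto simp: divide_le_eq)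
    ultimately show "(\<integral>\<^sup>+\<omega>. ennreal (exp (p * \<bar>Y N t \<omega>\<bar> powr q)) \<partial>P) = \<infinity>"
      using S D_borel[of T] T_pos by (intro nn_integral_exp_Y_infinite) auto
  qed
qed

end
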